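(* Let $(a_n)_{n\ge0}$ be a sequence of positive real numbers satisfying $\frac{a_{n+1}}{a_n}=\frac{an+b}{cn+d}$ for all $n\ge0$, where $a,b,c,d\ge0$ are real, $c\le d$, $a$ and $b$ are not both zero, and $c$ and $d$ are not both zero. Then for every $n\ge 0$ the polynomial $p_n(x)=\sum_{i=0}^n a_ix^i$ has exactly $n\bmod 2$ real roots counted with multiplicity (no real root if $n$ is even, exactly one if $n$ is odd). *)

theory Defs
  imports "HOL-Computational_Algebra.Polynomial"
begin

end

theory Submission
  imports Defs
begin

(* The partial sum P = p_n satisfies the differential equation
     (c - a x) x P'(x) + (d - c - b x) P(x) = (d - c) s_0 - K x^(n+1) =: H(x),   K > 0,
   obtained by telescoping the recurrence. The coefficients are positive, so every root r is
   negative, and at a root the equation reads r (c - a r) P'(r) = H(r) with r (c - a r) <= 0.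
   At the greatest root P' >= 0, so H(r) <= 0; for even n this is impossible since H > 0 on the
   negative axis. For odd n a root exists by degree parity. Differentiating the equation once more
   shows that the greatest root r is simple, so P < 0 just left of r; a next root r' < r would then
   have P'(r') <= 0, hence H(r') >= 0 >= H(r), whereas H is strictly increasing on the negative axis. *)

lemma poly_nonneg_at_left_end:
  fixes p :: "real poly"
  assumes "r < t" and "\<And>x. r < x \<Longrightarrow> x < t \<Longrightarrow> poly p x > 0"
  shows "poly p r \<ge> 0"
proof (rule ccontr)
  assume "\<not> poly p r \<ge> 0"
  moreover have "poly p ((r + t) / 2) > 0"
    using assms by simp
  ultimately obtain x where "r < x" "x < (r + t) / 2" "poly p x = 0"
    using poly_IVT_pos[of r "(r + t) / 2" p] assms(1) by auto
  with assms show False by force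
qed

lemma poly_pos_if_no_root_between:
  fixes p :: "real poly"
  assumes "y \<le> x" and "poly p x > 0" and "\<And>z. y \<le> z \<Longrightarrow> z \<le> x \<Longrightarrow> poly p z \<noteq> 0"
  shows "poly p y > 0"
proof (rule ccontr)
  assume "\<not> poly p y > 0"
  then have "poly p y < 0"
    using assms(1) assms(3)[of y] by fastforce
  then obtain z where "y < z" "z < x" "poly p z = 0"
    using poly_IVT_pos[where a = y and b = x and p = p] assms(1,2) by (cases "y = x") auto
  with assms(3)[of z] show False by simp
qed

lemma poly_pderiv_linear_factor_at_root:
  fixes r :: "'a::idom"
  shows "poly (pderiv ([:-r, 1:] * q)) r = poly q r"
proof -
  have "pderiv [:-r, 1:] = 1"
    by (simp add: pderiv_pCons)
  then show ?thesis
    by (simp only: pderiv_mult poly_add poly_mult) simp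
qed

lemma poly_pderiv2_square_factor_at_root:
  fixes r :: "'a::idom"
  shows "poly (pderiv (pderiv ([:-r, 1:] ^ 2 * q))) r = 2 * poly q r"
proof -
  have "pderiv [:-r, 1:] = 1"
    by (simp add: pderiv_pCons)
  then show ?thesis
    by (simp only: power2_eq_square mult.assoc pderiv_mult pderiv_add pderiv_1 poly_add poly_mult)
      simp
qed

lemma poly_cofactor_nonneg_at_root:
  fixes q :: "real poly"
  assumes "r < t" and "\<And>x. r < x \<Longrightarrow> x < t \<Longrightarrow> poly ([:-r, 1:] ^ k * q) x > 0"
  shows "poly q r \<ge> 0"
proof (rule poly_nonneg_at_left_end[OF assms(1)])
  fix x assume x: "r < x" "x < t"
  then have "(x - r) ^ k * poly q x > 0"
    using assms(2)[OF x] by (simp add: poly_power)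
  then show "poly q x > 0"
    using x by (simp add: zero_less_mult_iff)
qed

lemma pderiv_nonneg_at_root_pos_right:
  fixes p :: "real poly"
  assumes "poly p r = 0" and "r < t" and "\<And>x. r < x \<Longrightarrow> x < t \<Longrightarrow> poly p x > 0"
  shows "poly (pderiv p) r \<ge> 0"
proof -
  obtain q where q: "p = [:-r, 1:] * q"
    using assms(1) by (auto simp: poly_eq_0_iff_dvd elim: dvdE)
  have "poly q r \<ge> 0"
    using poly_cofactor_nonneg_at_root[of r t 1 q] assms(2,3) by (simp add: q)
  then show ?thesis
    unfolding q poly_pderiv_linear_factor_at_root .
qed

lemma pderiv_nonpos_at_root_neg_right:
  fixes p :: "real poly"
  assumes "poly p r = 0" and "r < t" and "\<And>x. r < x \<Longrightarrow> x < t \<Longrightarrow> poly p x < 0"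
  shows "poly (pderiv p) r \<le> 0"
  using pderiv_nonneg_at_root_pos_right[of "-p" r t] assms by (simp add: pderiv_minus)

lemma pderiv2_nonneg_at_double_root_pos_right:
  fixes p :: "real poly"
  assumes "poly p r = 0" and "poly (pderiv p) r = 0"
    and "r < t" and "\<And>x. r < x \<Longrightarrow> x < t \<Longrightarrow> poly p x > 0"
  shows "poly (pderiv (pderiv p)) r \<ge> 0"
proof -
  obtain q where q: "p = [:-r, 1:] * q"
    using assms(1) by (auto simp: poly_eq_0_iff_dvd elim: dvdE)
  have "poly q r = 0"
    using assms(2) unfolding q poly_pderiv_linear_factor_at_root .
  then obtain q' where "q = [:-r, 1:] * q'"
    by (auto simp: poly_eq_0_iff_dvd elim: dvdE)
  then have q': "p = [:-r, 1:] ^ 2 * q'"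
    by (simp only: q power2_eq_square mult.assoc)
  have "poly q' r \<ge> 0"
    using poly_cofactor_nonneg_at_root[of r t 2 q'] assms(3,4) by (simp add: q')
  then show ?thesis
    unfolding q' poly_pderiv2_square_factor_at_root by simp
qed

lemma poly_neg_left_of_increasing_root:
  fixes p :: "real poly"
  assumes "poly p r = 0" and "poly (pderiv p) r > 0"
    and "\<And>z. y < z \<Longrightarrow> z < r \<Longrightarrow> poly p z \<noteq> 0"
    and "y < x" and "x < r"
  shows "poly p x < 0"
proof -
  obtain q where q: "p = [:-r, 1:] * q"
    using assms(1) by (auto simp: poly_eq_0_iff_dvd elim: dvdE)
  have "poly q r > 0"
    using assms(2) unfolding q poly_pderiv_linear_factor_at_root .
  moreover have "poly q z \<noteq> 0" if "x \<le> z" "z < r" for z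
    using assms(3)[of z] assms(4) that by (simp add: q)
  ultimately have "poly q x > 0"
    using poly_pos_if_no_root_between[of x r q] assms(5) by force
  then show ?thesis
    using assms(5) by (simp add: q mult_neg_pos)
qed

lemma odd_degree_poly_neg_somewhere:
  fixes p :: "real poly"
  assumes "odd (degree p)" and "lead_coeff p > 0"
  shows "\<exists>x. poly p x < 0"
proof -
  obtain m where m: "degree p = Suc m"
    using assms(1) by (cases "degree p") auto
  define S where "S = (\<Sum>i\<le>m. \<bar>coeff p i\<bar>)"
  define M where "M = 1 + S / lead_coeff p"
  have "S \<ge> 0"
    by (simp add: S_def sum_nonneg)
  then have M: "M \<ge> 1"
    using assms(2) by (simp add: M_def)
  have "poly p (-M) = (\<Sum>i\<le>m. coeff p i * (-M) ^ i) + lead_coeff p * (-M) ^ Suc m"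
    by (simp add: poly_altdef m)
  also have "(\<Sum>i\<le>m. coeff p i * (-M) ^ i) \<le> (\<Sum>i\<le>m. \<bar>coeff p i\<bar> * M ^ m)"
  proof (rule sum_mono)
    fix i assume "i \<in> {..m}"
    have "coeff p i * (-M) ^ i \<le> \<bar>coeff p i * (-M) ^ i\<bar>"
      by (rule abs_ge_self)
    also have "\<dots> = \<bar>coeff p i\<bar> * M ^ i"
      using M by (simp add: abs_mult power_abs)
    also have "\<dots> \<le> \<bar>coeff p i\<bar> * M ^ m"
      using M \<open>i \<in> {..m}\<close> by (simp add: mult_left_mono power_increasing)
    finally show "coeff p i * (-M) ^ i \<le> \<bar>coeff p i\<bar> * M ^ m" .
  qed
  also have "(\<Sum>i\<le>m. \<bar>coeff p i\<bar> * M ^ m) = S * M ^ m"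
    by (simp add: S_def sum_distrib_right)
  also have "lead_coeff p * (-M) ^ Suc m = - ((lead_coeff p + S) * M ^ m)"
    using assms m M by (simp add: M_def field_simps power_minus_odd)
  finally have "poly p (-M) \<le> - (lead_coeff p * M ^ m)"
    by (simp add: algebra_simps)
  also have "\<dots> < 0"
    using assms(2) M by simp
  finally show ?thesis ..
qed

lemma poly_greatest_root_below:
  fixes p :: "real poly"
  assumes "p \<noteq> 0" and "poly p y = 0" and "y < u"
  obtains r where "poly p r = 0" and "r < u" and "\<And>z. poly p z = 0 \<Longrightarrow> z < u \<Longrightarrow> z \<le> r"
proof
  let ?R = "{z. poly p z = 0 \<and> z < u}"
  have fin: "finite ?R"
    using poly_roots_finite[OF assms(1)] by (rule finite_subset[rotated]) auto
  have "?R \<noteq> {}"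
    using assms(2,3) by auto
  then have "Max ?R \<in> ?R"
    using Max_in[OF fin] by blast
  then show "poly p (Max ?R) = 0" "Max ?R < u"
    by simp_all
  show "z \<le> Max ?R" if "poly p z = 0" "z < u" for z
    using Max_ge[OF fin] that by simp
qed

lemma poly_monom_sum:
  fixes x :: "'a::comm_semiring_1"
  shows "poly (\<Sum>i\<le>n. monom (s i) i) x = (\<Sum>i\<le>n. s i * x ^ i)"
  by (simp add: poly_sum poly_monom mult_ac)

lemma poly_pderiv_monom_sum:
  fixes x :: "'a::idom"
  shows "x * poly (pderiv (\<Sum>i\<le>n. monom (s i) i)) x = (\<Sum>i\<le>n. of_nat i * s i * x ^ i)"
proof -
  have "x * poly (pderiv (monom (s i) i)) x = of_nat i * s i * x ^ i" for i
    by (cases i) (simp_all add: pderiv_monom poly_monom mult_ac)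
  moreover have "pderiv (\<Sum>i\<le>n. monom (s i) i) = (\<Sum>i\<le>n. pderiv (monom (s i) i))"
    using higher_pderiv_sum[of 1 "\<lambda>i. monom (s i) i" "{..n}"] by simp
  ultimately show ?thesis
    by (simp add: poly_sum sum_distrib_left)
qed

lemma monom_sum_recurrence_identity:
  fixes s :: "nat \<Rightarrow> 'a::comm_ring_1"
  assumes "\<And>m. s (Suc m) * (c * of_nat m + d) = (a * of_nat m + b) * s m"
  shows "(c - a * x) * (\<Sum>i\<le>n. of_nat i * s i * x ^ i) + (d - c - b * x) * (\<Sum>i\<le>n. s i * x ^ i)
     = (d - c) * s 0 - (a * of_nat n + b) * s n * x ^ Suc n"
proof (induction n)
  case 0
  then show ?case by (simp add: algebra_simps)
next
  case (Suc n)
  have "(c - a * x) * (\<Sum>i\<le>Suc n. of_nat i * s i * x ^ i) + (d - c - b * x) * (\<Sum>i\<le>Suc n. s i * x ^ i)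
     = ((c - a * x) * (\<Sum>i\<le>n. of_nat i * s i * x ^ i) + (d - c - b * x) * (\<Sum>i\<le>n. s i * x ^ i))
       + x ^ Suc n * (s (Suc n) * (c * of_nat n + d))
       - (a * of_nat (Suc n) + b) * s (Suc n) * x ^ Suc (Suc n)"
    by (simp add: algebra_simps)
  also have "\<dots> = (d - c) * s 0 - (a * of_nat (Suc n) + b) * s (Suc n) * x ^ Suc (Suc n)"
    by (simp only: Suc assms) (simp add: algebra_simps)
  finally show ?case .
qed

locale hypergeometric_partial_sum =
  fixes s :: "nat \<Rightarrow> real" and a b c d :: real and n :: nat
  assumes pos: "\<And>m. s m > 0"
    and ratio: "\<And>m. s (Suc m) / s m = (a * real m + b) / (c * real m + d)"
    and a_nonneg: "a \<ge> 0" and c_nonneg: "c \<ge> 0" and c_le_d: "c \<le> d" and d_pos: "d > 0"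
begin

definition P :: "real poly" where
  "P = (\<Sum>i\<le>n. monom (s i) i)"

definition K :: real where
  "K = (a * real n + b) * s n"

definition H :: "real \<Rightarrow> real" where
  "H x = (d - c) * s 0 - K * x ^ Suc n"

lemma recurrence: "s (Suc m) * (c * real m + d) = (a * real m + b) * s m"
proof -
  have "c * real m + d > 0"
    using c_nonneg d_pos by (simp add: add_nonneg_pos)
  then show ?thesis
    using ratio[of m] pos[of m] by (simp add: field_simps)
qed

lemma b_pos: "b > 0"
proof -
  have "b * s 0 = s 1 * d"
    using recurrence[of 0] by simp
  then show ?thesis
    using pos[of 0] pos[of 1] d_pos by (metis mult_pos_pos zero_less_mult_pos2)
qed

lemma K_pos: "K > 0"
  using a_nonneg b_pos pos[of n] by (simp add: K_def add_nonneg_pos)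

lemma poly_P_pos:
  assumes "x \<ge> 0"
  shows "poly P x > 0"
proof -
  have "s 0 * x ^ 0 \<le> (\<Sum>i\<le>n. s i * x ^ i)"
    using assms by (intro member_le_sum) (auto intro!: mult_nonneg_nonneg less_imp_le[OF pos])
  then show ?thesis
    using pos[of 0] by (simp add: P_def poly_monom_sum)
qed

lemma P_nonzero: "P \<noteq> 0"
  using poly_P_pos[of 0] by auto

lemma root_neg: "poly P r = 0 \<Longrightarrow> r < 0"
  using poly_P_pos[of r] by force

lemma coeff_P: "coeff P k = (if k \<le> n then s k else 0)"
  by (simp add: P_def coeff_sum coeff_monom)

lemma degree_P: "degree P = n"
  using pos[of n] by (intro antisym degree_le le_degree) (auto simp: coeff_P)

lemma P_differential_equation:
  "[:c, -a:] * ([:0, 1:] * pderiv P) + [:d - c, -b:] * P = [:(d - c) * s 0:] - monom K (Suc n)"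
proof (rule poly_ext)
  fix x
  have "poly ([:c, -a:] * ([:0, 1:] * pderiv P) + [:d - c, -b:] * P) x
      = (c - a * x) * (x * poly (pderiv P) x) + (d - c - b * x) * poly P x"
    by (simp add: algebra_simps)
  also have "\<dots> = (d - c) * s 0 - K * x ^ Suc n"
    unfolding P_def K_def poly_pderiv_monom_sum poly_monom_sum
    by (rule monom_sum_recurrence_identity[OF recurrence])
  finally show "poly ([:c, -a:] * ([:0, 1:] * pderiv P) + [:d - c, -b:] * P) x
      = poly ([:(d - c) * s 0:] - monom K (Suc n)) x"
    by (simp add: poly_monom)
qed

lemma root_equation:
  assumes "poly P r = 0"
  shows "r * (c - a * r) * poly (pderiv P) r = H r"
  using arg_cong[OF P_differential_equation, of "\<lambda>p. poly p r"] assms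
  by (simp add: H_def poly_monom algebra_simps)

lemma double_root_equation:
  assumes "poly P r = 0" and "poly (pderiv P) r = 0"
  shows "r * (c - a * r) * poly (pderiv (pderiv P)) r = - (real (Suc n) * K * r ^ n)"
  using arg_cong[OF P_differential_equation, of "\<lambda>p. poly (pderiv p) r"] assms
  by (simp add: pderiv_mult pderiv_add pderiv_diff pderiv_minus pderiv_smult pderiv_monom
      pderiv_pCons poly_monom algebra_simps)

lemma root_weight_nonpos:
  assumes "r < 0"
  shows "r * (c - a * r) \<le> 0"
proof -
  have "a * r \<le> 0"
    using a_nonneg assms by (simp add: mult_nonneg_nonpos)
  then show ?thesis
    using c_nonneg assms by (simp add: mult_nonpos_nonneg)
qed

lemma pos_right_of_greatest_root:
  assumes "\<And>y. poly P y = 0 \<Longrightarrow> y \<le> r" and "r < x"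
  shows "poly P x > 0"
proof (cases "x \<ge> 0")
  case False
  then show ?thesis
    using poly_pos_if_no_root_between[of x 0 P] poly_P_pos[of 0] assms by force
qed (rule poly_P_pos)

lemma pderiv_nonneg_at_greatest_root:
  assumes "poly P r = 0" and "\<And>y. poly P y = 0 \<Longrightarrow> y \<le> r"
  shows "poly (pderiv P) r \<ge> 0"
  using pderiv_nonneg_at_root_pos_right[of P r 0] pos_right_of_greatest_root assms root_neg
  by blast

lemma H_nonpos_at_greatest_root:
  assumes "poly P r = 0" and "\<And>y. poly P y = 0 \<Longrightarrow> y \<le> r"
  shows "H r \<le> 0"
  using root_equation[OF assms(1)] root_weight_nonpos[OF root_neg[OF assms(1)]]
    pderiv_nonneg_at_greatest_root[OF assms]
  by (metis mult_nonpos_nonneg)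

lemma greatest_root_exists:
  assumes "poly P y = 0"
  obtains r where "poly P r = 0" and "\<And>z. poly P z = 0 \<Longrightarrow> z \<le> r"
  using poly_greatest_root_below[OF P_nonzero assms root_neg[OF assms]] root_neg by metis

lemma H_pos_if_even:
  assumes "even n" and "x < 0"
  shows "H x > 0"
proof -
  have "K * x ^ Suc n < 0"
    using assms K_pos by (simp add: mult_pos_neg power_less_zero_eq del: power_Suc)
  moreover have "(d - c) * s 0 \<ge> 0"
    using c_le_d pos[of 0] by simp
  ultimately show ?thesis
    by (simp add: H_def del: power_Suc)
qed

lemma H_strict_mono_if_odd:
  assumes "odd n" and "x < y" and "y < 0"
  shows "H x < H y"
proof -
  have "(-y) ^ Suc n < (-x) ^ Suc n"
    by (rule power_strict_mono) (use assms in auto)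
  then have "y ^ Suc n < x ^ Suc n"
    using assms(1) by (simp add: power_minus_even del: power_Suc)
  then show ?thesis
    using K_pos by (simp add: H_def del: power_Suc)
qed

lemma no_root_if_even:
  assumes "even n"
  shows "poly P y \<noteq> 0"
proof
  assume "poly P y = 0"
  then obtain r where r: "poly P r = 0" "\<And>z. poly P z = 0 \<Longrightarrow> z \<le> r"
    using greatest_root_exists by blast
  show False
    using H_nonpos_at_greatest_root[OF r] H_pos_if_even[OF assms root_neg[OF r(1)]] by simp
qed

lemma root_exists_if_odd:
  assumes "odd n"
  obtains r where "poly P r = 0"
proof -
  have "\<exists>x. poly P x < 0"
    by (rule odd_degree_poly_neg_somewhere) (simp_all add: degree_P coeff_P assms pos)
  then obtain x where x: "poly P x < 0" ..
  then have "x < 0"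
    using poly_P_pos[of x] by linarith
  then obtain z where "poly P z = 0"
    using poly_IVT_pos[of x 0 P] x poly_P_pos[of 0] by auto
  then show ?thesis ..
qed

lemma pderiv_pos_at_greatest_root_if_odd:
  assumes "odd n" and r: "poly P r = 0" "\<And>y. poly P y = 0 \<Longrightarrow> y \<le> r"
  shows "poly (pderiv P) r > 0"
proof -
  have "poly (pderiv P) r \<noteq> 0"
  proof
    assume r': "poly (pderiv P) r = 0"
    have "r < 0"
      using root_neg[OF r(1)] .
    then have "poly (pderiv (pderiv P)) r \<ge> 0"
      using pderiv2_nonneg_at_double_root_pos_right[OF r(1) r' \<open>r < 0\<close>]
        pos_right_of_greatest_root[OF r(2)] by blast
    then have "r * (c - a * r) * poly (pderiv (pderiv P)) r \<le> 0"
      using root_weight_nonpos[OF \<open>r < 0\<close>] by (simp add: mult_nonpos_nonneg)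
    moreover have "real (Suc n) * K * r ^ n < 0"
      using K_pos \<open>r < 0\<close> assms(1) by (simp add: mult_pos_neg power_less_zero_eq del: of_nat_Suc)
    ultimately show False
      using double_root_equation[OF r(1) r'] by simp
  qed
  then show ?thesis
    using pderiv_nonneg_at_greatest_root[OF r] by simp
qed

lemma greatest_root_unique_if_odd:
  assumes "odd n" and r: "poly P r = 0" "\<And>y. poly P y = 0 \<Longrightarrow> y \<le> r"
    and y: "poly P y = 0"
  shows "y = r"
proof (rule ccontr)
  assume "y \<noteq> r"
  with r(2)[OF y] have "y < r" by simp
  then obtain r' where r': "poly P r' = 0" "r' < r" "\<And>z. poly P z = 0 \<Longrightarrow> z < r \<Longrightarrow> z \<le> r'"
    using poly_greatest_root_below[OF P_nonzero y] by metis
  have "poly P x < 0" if "r' < x" "x < r" for x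
    using poly_neg_left_of_increasing_root[OF r(1) pderiv_pos_at_greatest_root_if_odd[OF assms(1) r]]
      r'(3) that by force
  then have "poly (pderiv P) r' \<le> 0"
    using pderiv_nonpos_at_root_neg_right[OF r'(1,2)] by blast
  then have "H r' \<ge> 0"
    using root_equation[OF r'(1)] root_weight_nonpos[OF root_neg[OF r'(1)]]
    by (metis mult_nonpos_nonpos)
  moreover have "H r' < H r"
    using H_strict_mono_if_odd[OF assms(1) r'(2) root_neg[OF r(1)]] .
  ultimately show False
    using H_nonpos_at_greatest_root[OF r] by simp
qed

lemma proots_P_if_odd:
  assumes "odd n"
  obtains r where "proots P = {#r#}"
proof -
  obtain y where "poly P y = 0"
    using root_exists_if_odd[OF assms] .
  then obtain r where r: "poly P r = 0" "\<And>z. poly P z = 0 \<Longrightarrow> z \<le> r"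
    using greatest_root_exists by blast
  have "order r (pderiv P) = 0"
    using pderiv_pos_at_greatest_root_if_odd[OF assms r] by (simp add: order_0I)
  then have "order r P = 1"
    using order_pderiv[OF P_nonzero r(1)] by simp
  moreover have "order x P = 0" if "x \<noteq> r" for x
    using greatest_root_unique_if_odd[OF assms r] that by (auto intro: order_0I)
  ultimately have "proots P = {#r#}"
    by (intro multiset_eqI) (auto simp: P_nonzero)
  then show ?thesis ..
qed

lemma size_proots_P: "size (proots P) = n mod 2"
proof (cases "even n")
  case True
  then have "proots P = {#}"
    using no_root_if_even by (intro multiset_eqI) (auto simp: P_nonzero intro: order_0I)
  then show ?thesis
    using True by simp
next
  case False
  then obtain r where "proots P = {#r#}"
    by (rule proots_P_if_odd)
  then show ?thesis
    using False by (simp add: odd_iff_mod_2_eq_one)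
qed

end

theorem theorem8p2:
  fixes s :: "nat \<Rightarrow> real" and a b c d :: real
  assumes pos: "\<And>n. s n > 0"
    and rec: "\<And>n. s (Suc n) / s n = (a * real n + b) / (c * real n + d)"
    and nonneg: "a \<ge> 0" "b \<ge> 0" "c \<ge> 0" "d \<ge> 0"
    and cd: "c \<le> d"
    and ab: "\<not> (a = 0 \<and> b = 0)"
    and cd0: "\<not> (c = 0 \<and> d = 0)"
  shows "size (proots (\<Sum>i\<le>n. monom (s i) i)) = n mod 2"
proof -
  (* ab is redundant: b > 0 follows from the recurrence at n = 0, see b_pos *)
  have "d > 0"
    using nonneg cd cd0 by linarith
  then interpret hypergeometric_partial_sum s a b c d n
    using pos rec nonneg cd by unfold_locales auto
  show ?thesis
    using size_proots_P by (simp add: P_def)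
qed

end
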